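(* Let $\mathbb{T}$ be a time scale, $c\in\mathbb{R}$ a constant, $m\in\mathbb{N}$ ($m\ge1$), $\alpha\in\,]0,1]$, and $t\in\mathbb{T}_\kappa$. (i) If $f(t)=(t-c)^m$, then $$f^{\nabla^\alpha}(t)=\begin{cases}[t-\rho(t)]^{1-\alpha}\sum_{\nu=0}^{m-1}[\rho(t)-c]^\nu(t-c)^{m-1-\nu}&\text{if }\alpha\neq1,\\ \sum_{\nu=0}^{m-1}[\rho(t)-c]^\nu(t-c)^{m-1-\nu}&\text{if }\alpha=1.\end{cases}$$ (ii) If $g(t)=\frac1{(t-c)^m}$, then, provided $[\rho(t)-c](t-c)\neq0$, $$g^{\nabla^\alpha}(t)=\begin{cases}-[t-\rho(t)]^{1-\alpha}\sum_{\nu=0}^{m-1}\frac{1}{[\rho(t)-c]^{m-\nu}(t-c)^{\nu+1}}&\text{if }\alpha\neq1,\\ -\sum_{\nu=0}^{m-1}\frac{1}{[\rho(t)-c]^{m-\nu}(t-c)^{\nu+1}}&\text{if }\alpha=1.\end{cases}$$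
   Context: A time scale $\mathbb{T}$ is a nonempty closed subset of $\mathbb{R}$. $\rho(t)=\sup\{s\in\mathbb{T}: s<t\}$ (with $\sup\emptyset=\inf\mathbb{T}$), $\sigma(t)=\inf\{s\in\mathbb{T}:s>t\}$ (with $\inf\emptyset=\sup\mathbb{T}$), $f^\rho=f\circ\rho$. $\mathbb{T}_\kappa=\mathbb{T}\setminus\{\inf\mathbb{T}\}$ if $\inf\mathbb{T}$ is finite with $\sigma(\inf\mathbb{T})>\inf\mathbb{T}$, otherwise $\mathbb{T}_\kappa=\mathbb{T}$. $0^\gamma=0$ for $\gamma>0$. Let $A=\,]0,1]\cap\{1/q: q\text{ odd positive integer}\}$; for $\alpha=1/q\in A$, $x^\alpha$ is the real $q$-th root. For $t\in\mathbb{T}_\kappa$, $f^{\nabla^\alpha}(t)$ is the real number (if it exists) such that for every $\varepsilon>0$ there is $\delta>0$ with $\big|[f(s)-f^\rho(t)]-f^{\nabla^\alpha}(t)[s-\rho(t)]^\alpha\big|\le\varepsilon|s-\rho(t)|^\alpha$ for all $s\in\,]t-\delta,t+\delta[\,\cap\mathbb{T}$ if $\alpha\in A$, resp. all $s\in[t,t+\delta[\,\cap\mathbb{T}$ if $\alpha\notin A$ (nabla fractional derivative of order $\alpha$). *)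

theory Defs
  imports "HOL-Analysis.Analysis"
begin

definition time_scale :: "real set \<Rightarrow> bool" where
  "time_scale T \<longleftrightarrow> T \<noteq> {} \<and> closed T"

definition ts_rho :: "real set \<Rightarrow> real \<Rightarrow> real" where
  "ts_rho T t = (if {s \<in> T. s < t} = {} then Inf T else Sup {s \<in> T. s < t})"

definition ts_sigma :: "real set \<Rightarrow> real \<Rightarrow> real" where
  "ts_sigma T t = (if {s \<in> T. s > t} = {} then Sup T else Inf {s \<in> T. s > t})"

definition ts_kappa :: "real set \<Rightarrow> real set" where
  "ts_kappa T = (if bdd_below T \<and> ts_sigma T (Inf T) > Inf T then T - {Inf T} else T)"

definition odd_recip :: "real set" where
  "odd_recip = {a. \<exists>q::nat. odd q \<and> 0 < q \<and> a = 1 / real q}"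

text \<open>x^alpha: real odd root for alpha in A (sgn x * |x|^(1/q)), otherwise powr
  (only used for nonnegative bases then; 0 powr a = 0).\<close>
definition frac_pow :: "real \<Rightarrow> real \<Rightarrow> real" where
  "frac_pow \<alpha> x = (if \<alpha> \<in> odd_recip then sgn x * \<bar>x\<bar> powr \<alpha> else x powr \<alpha>)"

definition has_nabla_frac :: "(real \<Rightarrow> real) \<Rightarrow> real \<Rightarrow> real \<Rightarrow> real set \<Rightarrow> real \<Rightarrow> bool" where
  "has_nabla_frac f \<alpha> D T t \<longleftrightarrow>
     (\<forall>\<epsilon>>0. \<exists>\<delta>>0. \<forall>s \<in> (if \<alpha> \<in> odd_recip then {t-\<delta><..<t+\<delta>} else {t..<t+\<delta>}) \<inter> T.
        \<bar>(f s - f (ts_rho T t)) - D * frac_pow \<alpha> (s - ts_rho T t)\<bar>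
          \<le> \<epsilon> * \<bar>s - ts_rho T t\<bar> powr \<alpha>)"

end

theory Submission
  imports Defs
begin

text \<open>Near t the function splits as f s - f \<rho> = (s - \<rho>) Q s with Q continuous at t, where
  \<rho> = \<rho>(t); for powers this is the factorisation of x^m - y^m, for reciprocal powers that of
  1/x^m - 1/y^m. If t is left-scattered, every point of T near t lies to the right of t, so
  s - \<rho> \<ge> t - \<rho> > 0 and the error term (s - \<rho>) Q s - (t - \<rho>)^(1-\<alpha>) Q t (s - \<rho>)^\<alpha>, which is
  continuous and vanishes at t, is small compared with (t - \<rho>)^\<alpha>. If t is left-dense
  (\<rho> = t), the case \<alpha> = 1 is the ordinary derivative Q t, and for \<alpha> < 1 the quotient
  |s - t| |Q s| / |s - t|^\<alpha> tends to 0, matching the value 0^(1-\<alpha>) Q t = 0 of the formula.\<close>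

lemma frac_pow_pos: "0 < x \<Longrightarrow> frac_pow \<alpha> x = x powr \<alpha>"
  by (simp add: frac_pow_def)

lemma frac_pow_one: "frac_pow 1 x = x"
proof -
  have "(1::real) \<in> odd_recip"
    unfolding odd_recip_def by (auto intro!: exI[of _ "1::nat"])
  then show ?thesis by (simp add: frac_pow_def sgn_mult_abs)
qed

lemma ts_rho_le:
  assumes "t \<in> T"
  shows "ts_rho T t \<le> t"
proof (cases "{s \<in> T. s < t} = {}")
  case True
  then have "bdd_below T"
    unfolding bdd_below_def by (metis (mono_tags, lifting) empty_Collect_eq not_le)
  then show ?thesis using True assms by (simp add: ts_rho_def cInf_lower)
next
  case False
  then have "Sup {s \<in> T. s < t} \<le> t" by (intro cSup_least) auto
  then show ?thesis using False unfolding ts_rho_def by presburger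
qed

lemma le_ts_rho:
  assumes "s \<in> T" "s < t"
  shows "s \<le> ts_rho T t"
proof -
  have "bdd_above {s \<in> T. s < t}"
    unfolding bdd_above_def by (auto intro!: exI[of _ t])
  then have "s \<le> Sup {s \<in> T. s < t}" using assms by (intro cSup_upper) auto
  then show ?thesis using assms by (auto simp: ts_rho_def)
qed

lemma ts_kappa_subset: "ts_kappa T \<subseteq> T"
  by (auto simp: ts_kappa_def)

text \<open>Working in a full neighbourhood of t serves both the two-sided and the one-sided
  variant of the definition at once.\<close>
lemma has_nabla_frac_nhdsI:
  assumes "\<And>\<epsilon>. 0 < \<epsilon> \<Longrightarrow> \<forall>\<^sub>F s in nhds t. s \<in> T \<longrightarrow>
      \<bar>f s - f (ts_rho T t) - D * frac_pow \<alpha> (s - ts_rho T t)\<bar> \<le> \<epsilon> * \<bar>s - ts_rho T t\<bar> powr \<alpha>"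
  shows "has_nabla_frac f \<alpha> D T t"
  unfolding has_nabla_frac_def
proof (intro allI impI)
  fix \<epsilon> :: real
  assume "0 < \<epsilon>"
  from assms[OF this] obtain \<delta> where "0 < \<delta>" and \<delta>: "\<And>s. dist s t < \<delta> \<Longrightarrow> s \<in> T \<longrightarrow>
      \<bar>f s - f (ts_rho T t) - D * frac_pow \<alpha> (s - ts_rho T t)\<bar> \<le> \<epsilon> * \<bar>s - ts_rho T t\<bar> powr \<alpha>"
    unfolding eventually_nhds_metric by blast
  moreover have "dist s t < \<delta>"
    if "s \<in> (if \<alpha> \<in> odd_recip then {t - \<delta><..<t + \<delta>} else {t..<t + \<delta>})" for s
    using that \<open>0 < \<delta>\<close> by (auto simp: dist_real_def split: if_splits)
  ultimately show "\<exists>\<delta>>0. \<forall>s\<in>(if \<alpha> \<in> odd_recip then {t - \<delta><..<t + \<delta>} else {t..<t + \<delta>}) \<inter> T.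
      \<bar>f s - f (ts_rho T t) - D * frac_pow \<alpha> (s - ts_rho T t)\<bar> \<le> \<epsilon> * \<bar>s - ts_rho T t\<bar> powr \<alpha>"
    by blast
qed

lemma has_nabla_frac_left_scattered:
  fixes f Q :: "real \<Rightarrow> real"
  assumes rho: "ts_rho T t = \<rho>" and "\<rho> < t" and gap: "\<And>s. s \<in> T \<Longrightarrow> s < t \<Longrightarrow> s \<le> \<rho>"
    and "0 \<le> \<alpha>"
    and factor: "\<forall>\<^sub>F s in nhds t. f s - f \<rho> = (s - \<rho>) * Q s" and "isCont Q t"
  shows "has_nabla_frac f \<alpha> ((t - \<rho>) powr (1 - \<alpha>) * Q t) T t"
proof (rule has_nabla_frac_nhdsI, unfold rho)
  fix \<epsilon> :: real
  assume "0 < \<epsilon>"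
  define D where "D = (t - \<rho>) powr (1 - \<alpha>) * Q t"
  define h where "h s = (s - \<rho>) * Q s - D * (s - \<rho>) powr \<alpha>" for s
  have "isCont h t"
    unfolding h_def using \<open>isCont Q t\<close> \<open>\<rho> < t\<close> by (intro continuous_intros) auto
  moreover have "h t = 0"
    using \<open>\<rho> < t\<close> by (simp add: h_def D_def powr_add[symmetric])
  ultimately have "(h \<longlongrightarrow> 0) (nhds t)"
    by (metis tendsto_at_iff_tendsto_nhds isCont_def)
  then have "\<forall>\<^sub>F s in nhds t. \<bar>h s\<bar> < \<epsilon> * (t - \<rho>) powr \<alpha>"
    using \<open>0 < \<epsilon>\<close> \<open>\<rho> < t\<close> by (intro order_tendstoD(2)[OF tendsto_rabs_zero]) auto
  moreover have "\<forall>\<^sub>F s in nhds t. \<rho> < s"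
    using \<open>\<rho> < t\<close> by (intro eventually_nhds_in_open[of "{\<rho><..}", simplified]) auto
  ultimately show "\<forall>\<^sub>F s in nhds t. s \<in> T \<longrightarrow>
      \<bar>f s - f \<rho> - D * frac_pow \<alpha> (s - \<rho>)\<bar> \<le> \<epsilon> * \<bar>s - \<rho>\<bar> powr \<alpha>"
    using factor
  proof eventually_elim
    case (elim s)
    show ?case
    proof
      assume "s \<in> T"
      with gap elim(2) have "t \<le> s" by force
      have "\<bar>f s - f \<rho> - D * frac_pow \<alpha> (s - \<rho>)\<bar> = \<bar>h s\<bar>"
        using elim(2,3) by (simp add: frac_pow_pos h_def)
      also have "\<dots> \<le> \<epsilon> * (t - \<rho>) powr \<alpha>" using elim(1) by simp
      also have "\<dots> \<le> \<epsilon> * \<bar>s - \<rho>\<bar> powr \<alpha>"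
        using \<open>0 < \<epsilon>\<close> \<open>\<rho> < t\<close> \<open>t \<le> s\<close> \<open>0 \<le> \<alpha>\<close> by (intro mult_left_mono powr_mono2) auto
      finally show "\<bar>f s - f \<rho> - D * frac_pow \<alpha> (s - \<rho>)\<bar> \<le> \<epsilon> * \<bar>s - \<rho>\<bar> powr \<alpha>" .
    qed
  qed
qed

lemma has_nabla_frac_left_dense_one:
  fixes f Q :: "real \<Rightarrow> real"
  assumes rho: "ts_rho T t = t"
    and factor: "\<forall>\<^sub>F s in nhds t. f s - f t = (s - t) * Q s" and "isCont Q t"
  shows "has_nabla_frac f 1 (Q t) T t"
proof (rule has_nabla_frac_nhdsI, unfold rho)
  fix \<epsilon> :: real
  assume "0 < \<epsilon>"
  have "((\<lambda>s. Q s - Q t) \<longlongrightarrow> Q t - Q t) (nhds t)"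
    using \<open>isCont Q t\<close> by (intro tendsto_intros) (simp add: tendsto_at_iff_tendsto_nhds[symmetric] isCont_def)
  then have "\<forall>\<^sub>F s in nhds t. \<bar>Q s - Q t\<bar> < \<epsilon>"
    using \<open>0 < \<epsilon>\<close> by (intro order_tendstoD(2)[OF tendsto_rabs_zero]) auto
  then show "\<forall>\<^sub>F s in nhds t. s \<in> T \<longrightarrow>
      \<bar>f s - f t - Q t * frac_pow 1 (s - t)\<bar> \<le> \<epsilon> * \<bar>s - t\<bar> powr 1"
    using factor
  proof eventually_elim
    case (elim s)
    have "\<bar>f s - f t - Q t * frac_pow 1 (s - t)\<bar> = \<bar>s - t\<bar> * \<bar>Q s - Q t\<bar>"
      using elim(2) by (simp add: frac_pow_one abs_mult[symmetric] algebra_simps)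
    also have "\<dots> \<le> \<bar>s - t\<bar> * \<epsilon>" using elim(1) by (intro mult_left_mono) auto
    finally show ?case by (simp add: mult.commute)
  qed
qed

lemma has_nabla_frac_left_dense_lt_one:
  fixes f Q :: "real \<Rightarrow> real"
  assumes rho: "ts_rho T t = t" and "\<alpha> < 1"
    and factor: "\<forall>\<^sub>F s in nhds t. f s - f t = (s - t) * Q s" and "isCont Q t"
  shows "has_nabla_frac f \<alpha> 0 T t"
proof (rule has_nabla_frac_nhdsI, unfold rho)
  fix \<epsilon> :: real
  assume "0 < \<epsilon>"
  have "((\<lambda>s. \<bar>s - t\<bar> powr (1 - \<alpha>) * Q s) \<longlongrightarrow> 0 * Q t) (at t)"
  proof (intro tendsto_mult tendsto_zero_powrI)
    show "((\<lambda>s. \<bar>s - t\<bar>) \<longlongrightarrow> 0) (at t)"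
      using tendsto_rabs[OF LIM_zero[OF tendsto_ident_at]] by simp
  qed (use \<open>\<alpha> < 1\<close> \<open>isCont Q t\<close> in \<open>auto simp: isCont_def\<close>)
  then have "((\<lambda>s. \<bar>s - t\<bar> powr (1 - \<alpha>) * Q s) \<longlongrightarrow> 0) (nhds t)"
    by (simp add: tendsto_nhds_iff)
  then have "\<forall>\<^sub>F s in nhds t. \<bar>\<bar>s - t\<bar> powr (1 - \<alpha>) * Q s\<bar> < \<epsilon>"
    using \<open>0 < \<epsilon>\<close> by (intro order_tendstoD(2)[OF tendsto_rabs_zero]) auto
  then show "\<forall>\<^sub>F s in nhds t. s \<in> T \<longrightarrow>
      \<bar>f s - f t - 0 * frac_pow \<alpha> (s - t)\<bar> \<le> \<epsilon> * \<bar>s - t\<bar> powr \<alpha>"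
    using factor
  proof eventually_elim
    case (elim s)
    have "\<bar>s - t\<bar> = \<bar>s - t\<bar> powr \<alpha> * \<bar>s - t\<bar> powr (1 - \<alpha>)"
      by (simp add: powr_add[symmetric])
    then have "\<bar>f s - f t - 0 * frac_pow \<alpha> (s - t)\<bar> = \<bar>s - t\<bar> powr \<alpha> * \<bar>\<bar>s - t\<bar> powr (1 - \<alpha>) * Q s\<bar>"
      using elim(2) by (simp add: abs_mult)
    also have "\<dots> \<le> \<bar>s - t\<bar> powr \<alpha> * \<epsilon>" using elim(1) by (intro mult_left_mono) auto
    finally show ?case by (simp add: mult.commute)
  qed
qed

lemma has_nabla_frac_of_factorization:
  fixes f Q :: "real \<Rightarrow> real"
  assumes "t \<in> T" "0 < \<alpha>" "\<alpha> \<le> 1"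
    and factor: "\<forall>\<^sub>F s in nhds t. f s - f (ts_rho T t) = (s - ts_rho T t) * Q s" and "isCont Q t"
  shows "has_nabla_frac f \<alpha> ((if \<alpha> \<noteq> 1 then (t - ts_rho T t) powr (1 - \<alpha>) else 1) * Q t) T t"
proof (cases "ts_rho T t < t")
  case True
  then have "(if \<alpha> \<noteq> 1 then (t - ts_rho T t) powr (1 - \<alpha>) else 1) = (t - ts_rho T t) powr (1 - \<alpha>)"
    by simp
  with has_nabla_frac_left_scattered[OF refl True le_ts_rho _ factor \<open>isCont Q t\<close>] \<open>0 < \<alpha>\<close>
  show ?thesis by simp
next
  case False
  then have rho: "ts_rho T t = t" using ts_rho_le[OF \<open>t \<in> T\<close>] by simp
  show ?thesis
  proof (cases "\<alpha> = 1")
    case True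
    then show ?thesis
      using has_nabla_frac_left_dense_one[OF rho _ \<open>isCont Q t\<close>] factor by (simp add: rho)
  next
    case False
    then show ?thesis
      using has_nabla_frac_left_dense_lt_one[OF rho _ _ \<open>isCont Q t\<close>] factor \<open>\<alpha> \<le> 1\<close>
      by (simp add: rho)
  qed
qed

lemma power_diff_eq_mult_sum:
  fixes x y :: "'a :: comm_ring_1"
  assumes "1 \<le> m"
  shows "x ^ m - y ^ m = (x - y) * (\<Sum>\<nu>=0..m-1. y ^ \<nu> * x ^ (m - 1 - \<nu>))"
proof -
  obtain n where m: "m = Suc n" using assms by (cases m) auto
  have "{0..m-1} = {..<Suc n}" using m by auto
  then show ?thesis
    using diff_power_eq_sum[of y n x] m by (simp add: algebra_simps)
qed

lemma inverse_power_diff_eq_mult_sum: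
  fixes x y :: "'a :: field"
  assumes "1 \<le> m" "x \<noteq> 0" "y \<noteq> 0"
  shows "1 / x ^ m - 1 / y ^ m = (x - y) * - (\<Sum>\<nu>=0..m-1. 1 / (y ^ (m - \<nu>) * x ^ (\<nu> + 1)))"
proof -
  have summand: "1 / (y ^ (m - \<nu>) * x ^ (\<nu> + 1)) = y ^ \<nu> * x ^ (m - 1 - \<nu>) / (x ^ m * y ^ m)"
    if "\<nu> \<in> {0..m-1}" for \<nu>
  proof -
    have "y ^ m = y ^ \<nu> * y ^ (m - \<nu>)"
      using that by (simp add: power_add[symmetric])
    moreover have "x ^ m = x ^ (m - 1 - \<nu>) * x ^ (\<nu> + 1)"
      using that assms(1) unfolding power_add[symmetric] by (intro arg_cong[where f = "(^) x"]) auto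
    ultimately
    show ?thesis using assms by (simp add: field_simps)
  qed
  have "(\<Sum>\<nu>=0..m-1. 1 / (y ^ (m - \<nu>) * x ^ (\<nu> + 1)))
      = (\<Sum>\<nu>=0..m-1. y ^ \<nu> * x ^ (m - 1 - \<nu>)) / (x ^ m * y ^ m)"
    unfolding sum_divide_distrib by (rule sum.cong[OF refl summand])
  then have "(x - y) * - (\<Sum>\<nu>=0..m-1. 1 / (y ^ (m - \<nu>) * x ^ (\<nu> + 1)))
      = - (x ^ m - y ^ m) / (x ^ m * y ^ m)"
    by (simp add: power_diff_eq_mult_sum[OF assms(1)])
  also have "\<dots> = 1 / x ^ m - 1 / y ^ m" using assms by (simp add: field_simps)
  finally show ?thesis by simp
qed

theorem theorem3p11:
  fixes T :: "real set" and c \<alpha> t :: real and m :: nat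
  assumes "time_scale T" and "1 \<le> m" and "0 < \<alpha>" and "\<alpha> \<le> 1"
    and "t \<in> ts_kappa T"
  shows "has_nabla_frac (\<lambda>s. (s - c) ^ m) \<alpha>
           ((if \<alpha> \<noteq> 1 then (t - ts_rho T t) powr (1 - \<alpha>) else 1) *
            (\<Sum>\<nu>=0..m-1. (ts_rho T t - c) ^ \<nu> * (t - c) ^ (m - 1 - \<nu>))) T t
    \<and> ((ts_rho T t - c) * (t - c) \<noteq> 0 \<longrightarrow>
         has_nabla_frac (\<lambda>s. 1 / (s - c) ^ m) \<alpha>
           (- (if \<alpha> \<noteq> 1 then (t - ts_rho T t) powr (1 - \<alpha>) else 1) *
            (\<Sum>\<nu>=0..m-1. 1 / ((ts_rho T t - c) ^ (m - \<nu>) * (t - c) ^ (\<nu> + 1)))) T t)"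
proof -
  define \<rho> where "\<rho> = ts_rho T t"
  have "t \<in> T" using assms(5) ts_kappa_subset by blast
  note nabla = has_nabla_frac_of_factorization[OF \<open>t \<in> T\<close> assms(3,4), folded \<rho>_def]
  have powers: "has_nabla_frac (\<lambda>s. (s - c) ^ m) \<alpha>
      ((if \<alpha> \<noteq> 1 then (t - \<rho>) powr (1 - \<alpha>) else 1) *
       (\<Sum>\<nu>=0..m-1. (\<rho> - c) ^ \<nu> * (t - c) ^ (m - 1 - \<nu>))) T t"
    using power_diff_eq_mult_sum[OF assms(2), of "_ - c" "\<rho> - c"]
    by (intro nabla[where Q = "\<lambda>s. \<Sum>\<nu>=0..m-1. (\<rho> - c) ^ \<nu> * (s - c) ^ (m - 1 - \<nu>)"]
        always_eventually allI continuous_intros) simp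
  have reciprocals: "has_nabla_frac (\<lambda>s. 1 / (s - c) ^ m) \<alpha>
      (- (if \<alpha> \<noteq> 1 then (t - \<rho>) powr (1 - \<alpha>) else 1) *
       (\<Sum>\<nu>=0..m-1. 1 / ((\<rho> - c) ^ (m - \<nu>) * (t - c) ^ (\<nu> + 1)))) T t"
    if "(\<rho> - c) * (t - c) \<noteq> 0"
  proof -
    have "\<rho> \<noteq> c" "t \<noteq> c" using that by auto
    then have "\<forall>\<^sub>F s in nhds t. s \<noteq> c" by (intro t1_space_nhds)
    then have factor: "\<forall>\<^sub>F s in nhds t. 1 / (s - c) ^ m - 1 / (\<rho> - c) ^ m
        = (s - \<rho>) * - (\<Sum>\<nu>=0..m-1. 1 / ((\<rho> - c) ^ (m - \<nu>) * (s - c) ^ (\<nu> + 1)))"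
    proof eventually_elim
      case (elim s)
      then show ?case
        using inverse_power_diff_eq_mult_sum[OF assms(2), of "s - c" "\<rho> - c"] \<open>\<rho> \<noteq> c\<close> by simp
    qed
    have "isCont (\<lambda>s. - (\<Sum>\<nu>=0..m-1. 1 / ((\<rho> - c) ^ (m - \<nu>) * (s - c) ^ (\<nu> + 1)))) t"
      using \<open>\<rho> \<noteq> c\<close> \<open>t \<noteq> c\<close> by (intro continuous_intros) auto
    from nabla[OF factor this] show ?thesis by simp
  qed
  show ?thesis using powers reciprocals unfolding \<rho>_def by blast
qed

end
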